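(* Let $\widetilde{\mathbf{X}}\in\mathbb{R}^d$ be a random vector, and let $P_N$ be the empirical distribution of $N$ i.i.d. copies of $\widetilde{\mathbf{X}}$, with $P$ its distribution. Let $f_1,f_2,\dots$ be a sequence in $H$ with $f_N\in h(N)\mathcal{F}_N$, where $h(N)\in o(N^{1/4-\delta})$ for some $\delta>0$. Assume $\widehat R_N(\mathcal{F}_N)\in O(N^{-1/2})$. Then $$\big|(P_N-P)f_N^2\big|\xrightarrow{\ \mathbb{P}\ }0\qquad(N\to\infty).$$
   Context: $H=H_1\oplus\cdots\oplus H_d$ is the additive RKHS of Gaussian kernels $K_j(x,x')=\exp(-|x-x'|^2/(2\varsigma_j))$, with bounded kernel $K=\sum_jK_j$. $$\mathcal{F}_N=\Big\{f\in H: f=\frac1{\sqrt N}\sum_{\ell=1}^N\beta_\ell K(\cdot,\mathbf{x}_\ell),\ \|f\|_H=1,\ \beta\in\mathbb{R}^N,\ \mathbf{x}_1,\dots,\mathbf{x}_N\in\mathbb{R}^d\Big\},$$ and $h\mathcal{F}_N=\{hf:f\in\mathcal{F}_N\}$. Empirical Rademacher complexity: for observations $\mathbf{x}_1,\dots,\mathbf{x}_N$ and i.i.d. Rademacher signs $\sigma_\ell$ independent of the data, $$\widehat R_N(\mathcal{F})=\frac1N\mathbb{E}_\sigma\Big[\sup_{f\in\mathcal{F}}\Big|\sum_{\ell=1}^N\sigma_\ell f(\mathbf{x}_\ell)\Big|\Big].$$ $(P_N-P)g=\frac1N\sum_\ell g(\mathbf{x}_\ell)-\mathbb{E}[g(\widetilde{\mathbf{X}})]$.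 *)

theory Defs
  imports "HOL-Probability.Probability" "HOL-Library.Landau_Symbols"
begin

definition add_gauss_kernel :: "('d::finite \<Rightarrow> real) \<Rightarrow> real^'d \<Rightarrow> real^'d \<Rightarrow> real" where
  "add_gauss_kernel s x y = (\<Sum>j\<in>UNIV. exp (- ((x $ j - y $ j)^2) / (2 * s j)))"

text \<open>The class F_N: functions (1/sqrt N) sum_l beta_l K(., c_l) with RKHS norm 1;
  the squared RKHS norm of such a function is (1/N) sum_l sum_m beta_l beta_m K(c_l, c_m).\<close>
definition Fclass :: "('d::finite \<Rightarrow> real) \<Rightarrow> nat \<Rightarrow> (real^'d \<Rightarrow> real) set" where
  "Fclass s N = {f. \<exists>(\<beta>::nat \<Rightarrow> real) (c::nat \<Rightarrow> real^'d).
      f = (\<lambda>x. (1 / sqrt (real N)) * (\<Sum>l<N. \<beta> l * add_gauss_kernel s x (c l))) \<and>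
      (1 / real N) * (\<Sum>l<N. \<Sum>m<N. \<beta> l * \<beta> m * add_gauss_kernel s (c l) (c m)) = 1}"

definition emp_rademacher :: "('a \<Rightarrow> real) set \<Rightarrow> nat \<Rightarrow> (nat \<Rightarrow> 'a) \<Rightarrow> real" where
  "emp_rademacher F N x =
     (1 / real N) * ((\<Sum>\<sigma>\<in>PiE {..<N} (\<lambda>_. {-1, 1::real}).
         (SUP f\<in>F. \<bar>\<Sum>l<N. \<sigma> l * f (x l)\<bar>)) / 2 ^ N)"

end

theory Submission
  imports Defs "HOL-Real_Asymp.Real_Asymp"
begin

text \<open>
  The Gaussian kernel is positive semidefinite, so the reproducing-kernel Cauchy--Schwarz
  inequality gives \<open>g(x)\<^sup>2 \<le> \<parallel>g\<parallel>\<^sub>H\<^sup>2 K(x,x) = d\<close> for every \<open>g \<in> F\<^sub>N\<close>. Hence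
  \<open>0 \<le> f\<^sub>N\<^sup>2 \<le> B\<^sub>N := d h(N)\<^sup>2 + 1\<close>, and Hoeffding's inequality bounds the probability of an
  \<open>\<epsilon>\<close>-deviation of the empirical mean of \<open>f\<^sub>N\<^sup>2\<close> by \<open>2 exp(-2N\<epsilon>\<^sup>2/B\<^sub>N\<^sup>2) \<le> B\<^sub>N\<^sup>2/(N\<epsilon>\<^sup>2)\<close>,
  which tends to \<open>0\<close> because \<open>h \<in> o(N\<^bsup>1/4\<^esup>)\<close>. The uniform bound makes the hypothesis
  on the Rademacher complexity superfluous.
\<close>

text \<open>Expanding \<open>exp(a b/s)\<close> in
  \<open>exp(-(a - b)\<^sup>2/(2s)) = exp(-a\<^sup>2/(2s)) exp(-b\<^sup>2/(2s)) exp(a b/s)\<close> into its power series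
  writes the quadratic form as a series of squares.\<close>
lemma gaussian_kernel_psd:
  fixes I :: "'i set" and v a :: "'i \<Rightarrow> real" and s :: real
  assumes "finite I" "s > 0"
  shows "0 \<le> (\<Sum>i\<in>I. \<Sum>j\<in>I. v i * v j * exp (- ((a i - a j)^2) / (2 * s)))"
proof -
  define u where "u i = v i * exp (- ((a i)^2) / (2 * s))" for i
  have factor: "v i * v j * exp (- ((a i - a j)^2) / (2 * s)) = u i * u j * exp (a i * a j / s)"
    for i j
  proof -
    have "- ((a i - a j)^2) / (2 * s) = - ((a i)^2) / (2 * s) + - ((a j)^2) / (2 * s) + a i * a j / s"
      using assms(2) by (simp add: field_simps power2_eq_square)
    then show ?thesis
      by (simp only: exp_add u_def mult_ac)
  qed
  have "(\<lambda>k. u i * u j * ((a i * a j / s)^k / fact k)) sums (u i * u j * exp (a i * a j / s))"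
    for i j
    using sums_mult[OF exp_converges[of "a i * a j / s"]] by (simp add: divide_inverse mult.commute)
  then have series: "(\<lambda>k. \<Sum>i\<in>I. \<Sum>j\<in>I. u i * u j * ((a i * a j / s)^k / fact k)) sums
      (\<Sum>i\<in>I. \<Sum>j\<in>I. u i * u j * exp (a i * a j / s))"
    by (intro sums_sum)
  have square: "(\<Sum>i\<in>I. \<Sum>j\<in>I. u i * u j * ((a i * a j / s)^k / fact k)) =
      (\<Sum>i\<in>I. u i * a i ^ k)^2 / (s^k * fact k)" for k
    by (simp add: power2_eq_square sum_distrib_left sum_distrib_right sum_divide_distrib
        power_mult_distrib power_divide algebra_simps)
  have "0 \<le> (\<Sum>i\<in>I. \<Sum>j\<in>I. u i * u j * exp (a i * a j / s))"
    using sums_le[OF _ sums_zero series] square assms(2) by simp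
  then show ?thesis
    by (simp only: factor)
qed

lemma add_gauss_kernel_psd:
  fixes I :: "'i set" and v :: "'i \<Rightarrow> real" and p :: "'i \<Rightarrow> real^'d::finite"
  assumes "finite I" "\<And>j. s j > 0"
  shows "0 \<le> (\<Sum>i\<in>I. \<Sum>k\<in>I. v i * v k * add_gauss_kernel s (p i) (p k))"
proof -
  have "(\<Sum>i\<in>I. \<Sum>k\<in>I. v i * v k * add_gauss_kernel s (p i) (p k)) =
     (\<Sum>j\<in>UNIV. \<Sum>i\<in>I. \<Sum>k\<in>I. v i * v k * exp (- ((p i $ j - p k $ j)^2) / (2 * s j)))"
    unfolding add_gauss_kernel_def by (simp add: sum_distrib_left sum.swap[of _ UNIV])
  also have "\<dots> \<ge> 0"
    by (intro sum_nonneg gaussian_kernel_psd assms)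
  finally show ?thesis .
qed

lemma add_gauss_kernel_commute: "add_gauss_kernel s x y = add_gauss_kernel s y x"
  unfolding add_gauss_kernel_def by (simp add: power2_commute)

lemma add_gauss_kernel_diag: "add_gauss_kernel s x x = real CARD('d)"
  for x :: "real^'d::finite"
  unfolding add_gauss_kernel_def by simp

text \<open>Applied to the point set \<open>c\<^sub>0, \<dots>, c\<^sub>N\<^sub>-\<^sub>1, x\<close> with weights \<open>\<beta>\<^sub>0, \<dots>, \<beta>\<^sub>N\<^sub>-\<^sub>1, t\<close>,
  positive semidefiniteness says that a quadratic polynomial in \<open>t\<close> is nonnegative.\<close>
lemma psd_kernel_cauchy_schwarz:
  fixes K :: "'a \<Rightarrow> 'a \<Rightarrow> real" and N :: nat and \<beta> :: "nat \<Rightarrow> real" and c :: "nat \<Rightarrow> 'a"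
  assumes psd: "\<And>n (v :: nat \<Rightarrow> real) p. 0 \<le> (\<Sum>i<n. \<Sum>k<n. v i * v k * K (p i) (p k))"
    and sym: "\<And>x y. K x y = K y x"
  shows "(\<Sum>l<N. \<beta> l * K x (c l))^2 \<le> (\<Sum>l<N. \<Sum>m<N. \<beta> l * \<beta> m * K (c l) (c m)) * K x x"
proof -
  define A where "A = (\<Sum>l<N. \<Sum>m<N. \<beta> l * \<beta> m * K (c l) (c m))"
  define B where "B = (\<Sum>l<N. \<beta> l * K x (c l))"
  define C where "C = K x x"
  have quadratic: "0 \<le> A + 2 * t * B + t^2 * C" for t
  proof -
    define v where "v = \<beta>(N := t)"
    define p where "p = c(N := x)"
    have "0 \<le> (\<Sum>i<Suc N. \<Sum>k<Suc N. v i * v k * K (p i) (p k))"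
      by (rule psd)
    also have "\<dots> = (\<Sum>i<N. \<Sum>k<N. v i * v k * K (p i) (p k)) + (\<Sum>i<N. v i * v N * K (p i) (p N))
        + (\<Sum>k<N. v N * v k * K (p N) (p k)) + v N * v N * K (p N) (p N)"
      by (simp add: sum.distrib)
    also have "(\<Sum>i<N. \<Sum>k<N. v i * v k * K (p i) (p k)) = A"
      unfolding A_def v_def p_def by (intro sum.cong refl) auto
    also have "(\<Sum>i<N. v i * v N * K (p i) (p N)) = t * B"
      unfolding B_def v_def p_def by (auto simp: sum_distrib_left mult_ac sym[of x] intro!: sum.cong)
    also have "(\<Sum>k<N. v N * v k * K (p N) (p k)) = t * B"
      unfolding B_def v_def p_def by (auto simp: sum_distrib_left mult_ac intro!: sum.cong)
    also have "v N * v N * K (p N) (p N) = t^2 * C"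
      unfolding v_def p_def C_def by (simp add: power2_eq_square)
    finally show ?thesis
      by (simp add: algebra_simps)
  qed
  have "0 \<le> C"
    using psd[where n=1 and v="\<lambda>_. 1" and p="\<lambda>_. x"] by (simp add: C_def)
  have "B^2 \<le> A * C"
  proof (cases "C = 0")
    case True
    have "B = 0"
    proof (rule ccontr)
      assume "B \<noteq> 0"
      then show False
        using quadratic[of "- (A + 1) / (2 * B)"] True by (simp add: field_simps)
    qed
    then show ?thesis
      using True by simp
  next
    case False
    with \<open>0 \<le> C\<close> have "C > 0" by simp
    have "0 \<le> A + 2 * (- B / C) * B + (- B / C)^2 * C"
      by (rule quadratic)
    then have "0 \<le> (A * C - B^2) / C"
      using \<open>C > 0\<close> by (simp add: field_simps power2_eq_square)
    then show ?thesis
      using \<open>C > 0\<close> by (simp add: zero_le_divide_iff)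
  qed
  then show ?thesis
    by (simp add: A_def B_def C_def)
qed

lemma Fclass_sq_le:
  fixes g :: "real^'d::finite \<Rightarrow> real"
  assumes g: "g \<in> Fclass s N" and s: "\<And>j. s j > 0"
  shows "(g x)^2 \<le> real CARD('d)"
proof -
  obtain \<beta> c
    where g_eq: "g = (\<lambda>x. (1 / sqrt (real N)) * (\<Sum>l<N. \<beta> l * add_gauss_kernel s x (c l)))"
      and norm: "(1 / real N) * (\<Sum>l<N. \<Sum>m<N. \<beta> l * \<beta> m * add_gauss_kernel s (c l) (c m)) = 1"
    using g unfolding Fclass_def by blast
  have "N > 0" \<comment> \<open>the normalisation fails for \<open>N = 0\<close>, where \<open>1 / 0 = 0\<close>\<close>
    using norm by (cases N) auto
  have "(\<Sum>l<N. \<beta> l * add_gauss_kernel s x (c l))^2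
      \<le> (\<Sum>l<N. \<Sum>m<N. \<beta> l * \<beta> m * add_gauss_kernel s (c l) (c m)) * add_gauss_kernel s x x"
    by (intro psd_kernel_cauchy_schwarz add_gauss_kernel_psd add_gauss_kernel_commute s) simp
  also have "\<dots> = real N * real CARD('d)"
    using norm \<open>N > 0\<close> by (simp add: add_gauss_kernel_diag field_simps)
  finally show ?thesis
    using \<open>N > 0\<close> by (simp add: g_eq power_mult_distrib power_divide field_simps)
qed

lemma Fclass_borel_measurable:
  assumes "g \<in> Fclass s N"
  shows "g \<in> borel_measurable borel"
proof -
  obtain \<beta> c where g_eq: "g = (\<lambda>x. (1 / sqrt (real N)) * (\<Sum>l<N. \<beta> l * add_gauss_kernel s x (c l)))"
    using assms unfolding Fclass_def by blast
  have "continuous_on UNIV g"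
    unfolding g_eq add_gauss_kernel_def divide_inverse by (intro continuous_intros)
  then show ?thesis
    by (rule borel_measurable_continuous_onI)
qed

lemma exp_neg_le_inverse:
  fixes y :: real
  assumes "y > 0"
  shows "exp (- y) \<le> 1 / y"
proof -
  have "y \<le> exp y"
    using exp_ge_add_one_self[of y] by linarith
  then show ?thesis
    using assms by (simp add: exp_minus field_simps)
qed

lemma iid_mean_deviation_prob_le:
  fixes M :: "'w measure" and X :: "nat \<Rightarrow> 'w \<Rightarrow> 'a" and F :: "'a \<Rightarrow> real"
  assumes M: "prob_space M"
    and X_meas: "\<And>i. X i \<in> measurable M S"
    and X_indep: "prob_space.indep_vars M (\<lambda>_. S) X UNIV"
    and X_distr: "\<And>i. distr M S (X i) = P"
    and F: "F \<in> borel_measurable S" "\<And>x. F x \<in> {0..B}"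
    and B: "B > 0" and N: "N \<ge> 1" and \<epsilon>: "\<epsilon> > 0"
  shows "measure M {\<omega> \<in> space M. \<bar>(1 / real N) * (\<Sum>l<N. F (X l \<omega>)) - (\<integral>x. F x \<partial>P)\<bar> > \<epsilon>}
    \<le> B^2 / (real N * \<epsilon>^2)"
proof -
  interpret prob_space M by (rule M)
  have distr_FX: "distr M borel (\<lambda>\<omega>. F (X l \<omega>)) = distr P borel F" for l
    using distr_distr[OF F(1) X_meas, of l] by (simp add: comp_def X_distr)
  interpret Hoeffding_ineq_iid M "{..<N}" "\<lambda>l \<omega>. F (X l \<omega>)" "\<lambda>\<omega>. F (X 0 \<omega>)" 0 B
    "expectation (\<lambda>\<omega>. F (X 0 \<omega>))"
  proof unfold_locales
    show "indep_vars (\<lambda>_. borel) (\<lambda>l \<omega>. F (X l \<omega>)) {..<N}"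
      using indep_vars_compose2[OF indep_vars_subset[OF X_indep] F(1)] by simp
    show "random_variable borel (\<lambda>\<omega>. F (X 0 \<omega>))"
      using F(1) X_meas by measurable
    show "distr M borel (\<lambda>\<omega>. F (X l \<omega>)) = distr M borel (\<lambda>\<omega>. F (X 0 \<omega>))" for l
      by (simp only: distr_FX)
    show "AE \<omega> in M. F (X 0 \<omega>) \<in> {0..B}"
      using F(2) by simp
  qed simp_all
  have mean: "expectation (\<lambda>\<omega>. F (X 0 \<omega>)) = (\<integral>x. F x \<partial>P)"
    using integral_distr[OF X_meas F(1), of 0] unfolding X_distr by simp
  define y where "y = 2 * real N * \<epsilon>^2 / B^2"
  have "y > 0"
    using B N \<epsilon> by (simp add: y_def)
  have "measure M {\<omega> \<in> space M. \<bar>(1 / real N) * (\<Sum>l<N. F (X l \<omega>)) - (\<integral>x. F x \<partial>P)\<bar> > \<epsilon>}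
      \<le> prob {\<omega> \<in> space M. \<bar>(\<Sum>l\<in>{..<N}. F (X l \<omega>)) / real (card {..<N})
                             - expectation (\<lambda>\<omega>. F (X 0 \<omega>))\<bar> \<ge> \<epsilon>}"
    by (rule finite_measure_mono) (use F(1) X_meas in \<open>auto simp: mean\<close>)
  also have "\<dots> \<le> 2 * exp (- 2 * real (card {..<N}) * \<epsilon>^2 / (B - 0)^2)"
    by (rule Hoeffding_ineq_abs_ge') (use B N \<epsilon> in \<open>auto simp: lessThan_empty_iff\<close>)
  also have "\<dots> = 2 * exp (- y)"
    by (simp add: y_def)
  also have "\<dots> \<le> 2 / y"
    using exp_neg_le_inverse[OF \<open>y > 0\<close>] by simp
  also have "\<dots> = B^2 / (real N * \<epsilon>^2)"
    using B N \<epsilon> by (simp add: y_def)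
  finally show ?thesis .
qed

lemma scaled_Fclass_mean_deviation_prob_le:
  fixes X :: "nat \<Rightarrow> 'w \<Rightarrow> real^'d::finite"
  assumes "prob_space M" "\<And>i. X i \<in> borel_measurable M"
    and "prob_space.indep_vars M (\<lambda>_. borel) X UNIV" "\<And>i. distr M borel (X i) = P"
    and g: "g \<in> Fclass s N" and s: "\<And>j. s j > 0" and N: "N \<ge> 1" and \<epsilon>: "\<epsilon> > 0"
  shows "measure M {\<omega> \<in> space M.
      \<bar>(1 / real N) * (\<Sum>l<N. (a * g (X l \<omega>))^2) - (\<integral>x. (a * g x)^2 \<partial>P)\<bar> > \<epsilon>}
    \<le> (real CARD('d) * a^2 + 1)^2 / (real N * \<epsilon>^2)"
proof (rule iid_mean_deviation_prob_le[OF assms(1-4)])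
  show "(\<lambda>x. (a * g x)^2) \<in> borel_measurable borel"
    using Fclass_borel_measurable[OF g] by measurable
  show "(a * g x)^2 \<in> {0..real CARD('d) * a^2 + 1}" for x
    using mult_left_mono[OF Fclass_sq_le[OF g s, of x], of "a^2"]
    by (simp add: power_mult_distrib mult.commute)
qed (use N \<epsilon> in \<open>simp_all add: add_nonneg_pos\<close>)

lemma smallo_quarter_power_quartic:
  fixes h :: "nat \<Rightarrow> real"
  assumes "h \<in> o(\<lambda>N. real N powr (1/4))"
  shows "(\<lambda>N. (C * (h N)^2 + 1)^2) \<in> o(\<lambda>N. real N)"
proof -
  have "(\<lambda>N. (h N)^2) \<in> o(\<lambda>N. real N powr (1/4) * real N powr (1/4))"
    unfolding power2_eq_square by (intro landau_o.small_mult assms)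
  also have "(\<lambda>N. real N powr (1/4) * real N powr (1/4)) \<in> \<Theta>(\<lambda>N. sqrt (real N))"
    by real_asymp
  finally have "(\<lambda>N. (h N)^2) \<in> o(\<lambda>N. sqrt (real N))" .
  moreover have "(\<lambda>_. 1) \<in> o(\<lambda>N. sqrt (real N))"
    by real_asymp
  ultimately have "(\<lambda>N. C * (h N)^2 + 1) \<in> o(\<lambda>N. sqrt (real N))"
    using landau_o.big_small_mult[of "\<lambda>_. C" sequentially "\<lambda>_. 1"] by (auto intro!: sum_in_smallo)
  then have "(\<lambda>N. (C * (h N)^2 + 1)^2) \<in> o(\<lambda>N. sqrt (real N) * sqrt (real N))"
    unfolding power2_eq_square by (intro landau_o.small_mult)
  also have "(\<lambda>N. sqrt (real N) * sqrt (real N)) \<in> \<Theta>(\<lambda>N. real N)"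
    by real_asymp
  finally show ?thesis .
qed

theorem corollary2:
  fixes M :: "'w measure" and X :: "nat \<Rightarrow> 'w \<Rightarrow> real^'d::finite"
    and P :: "(real^'d) measure" and s :: "'d \<Rightarrow> real"
    and f :: "nat \<Rightarrow> real^'d \<Rightarrow> real" and h :: "nat \<Rightarrow> real" and \<delta> :: real
  assumes "prob_space M"
    and "\<And>i. X i \<in> borel_measurable M"
    and "prob_space.indep_vars M (\<lambda>_. borel) X UNIV"
    and "\<And>i. distr M borel (X i) = P"
    and "\<And>j. s j > 0"
    and "\<delta> > 0"
    and "h \<in> o(\<lambda>N. real N powr (1/4 - \<delta>))"
    and "\<And>N. N \<ge> 1 \<Longrightarrow> \<exists>g\<in>Fclass s N. f N = (\<lambda>x. h N * g x)"
    and "AE \<omega> in M. (\<lambda>N. emp_rademacher (Fclass s N) N (\<lambda>l. X l \<omega>))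
                       \<in> O(\<lambda>N. real N powr (-1/2))"
  shows "\<forall>\<epsilon>>0. (\<lambda>N. measure M {\<omega> \<in> space M.
            \<bar>(1 / real N) * (\<Sum>l<N. (f N (X l \<omega>))^2) - (\<integral>x. (f N x)^2 \<partial>P)\<bar> > \<epsilon>})
          \<longlonglongrightarrow> 0"
proof (intro allI impI)
  fix \<epsilon> :: real
  assume "\<epsilon> > 0"
  define dev where "dev N = measure M {\<omega> \<in> space M.
      \<bar>(1 / real N) * (\<Sum>l<N. (f N (X l \<omega>))^2) - (\<integral>x. (f N x)^2 \<partial>P)\<bar> > \<epsilon>}" for N
  define B where "B N = real CARD('d) * (h N)^2 + 1" for N
  have "dev N \<le> (B N)^2 / (real N * \<epsilon>^2)" if N: "N \<ge> 1" for N
  proof -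
    obtain g where g: "g \<in> Fclass s N" and f_eq: "f N = (\<lambda>x. h N * g x)"
      using assms(8)[OF N] by blast
    show ?thesis
      using scaled_Fclass_mean_deviation_prob_le[OF assms(1-4) g assms(5) N \<open>\<epsilon> > 0\<close>]
      by (simp only: dev_def B_def f_eq)
  qed
  then have tail: "\<forall>\<^sub>F N in sequentially. norm (dev N) \<le> (B N)^2 / (real N * \<epsilon>^2)"
    by (intro eventually_sequentiallyI) (simp add: dev_def)
  have "(\<lambda>N. real N powr (1/4 - \<delta>)) \<in> O(\<lambda>N. real N powr (1/4))"
    using assms(6) by (subst powr_bigo_iff) (auto intro: filterlim_real_sequentially)
  then have "(\<lambda>N. (B N)^2) \<in> o(\<lambda>N. real N)"
    unfolding B_def by (rule smallo_quarter_power_quartic[OF landau_o.small_big_trans[OF assms(7)]])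
  then have "(\<lambda>N. (B N)^2 / real N / \<epsilon>^2) \<longlonglongrightarrow> 0"
    by (intro tendsto_divide_zero smalloD_tendsto)
  then have "(\<lambda>N. (B N)^2 / (real N * \<epsilon>^2)) \<longlonglongrightarrow> 0"
    by (simp add: divide_divide_eq_left)
  with tail have "dev \<longlonglongrightarrow> 0"
    by (rule Lim_null_comparison)
  then show "(\<lambda>N. measure M {\<omega> \<in> space M.
      \<bar>(1 / real N) * (\<Sum>l<N. (f N (X l \<omega>))^2) - (\<integral>x. (f N x)^2 \<partial>P)\<bar> > \<epsilon>}) \<longlonglongrightarrow> 0"
    by (simp only: dev_def[abs_def])
qed

end
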